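(* Let $G$ be a graph and $S\subseteq V(G)$. Then one can admissibly remove a subset of $S$ from $G$ such that, in the remaining graph, the remaining vertices of $S$ form a clique and each of them has odd degree in the remaining graph.
   Context: Removing a set $T$ of vertices from a graph $G$ is a simple admissible removal if $T$ is an independent set in $G$ and the number of edges between $T$ and $V(G)\setminus T$ is even. Removing a (not necessarily independent) set of vertices is admissible if it can be realised by a sequence of simple admissible removals, each performed in the graph remaining after the previous ones. Degrees are always taken in the current remaining graph. *)

theory Defs
  imports Main
begin

text \<open>Removing a set of vertices leaves the induced subgraph on the rest, so a
  graph state after removals is represented by its remaining vertex set W (with E
  restricted to W).\<close>

definition simple_graph :: "'a set \<Rightarrow> ('a \<Rightarrow> 'a \<Rightarrow> bool) \<Rightarrow> bool" where
  "simple_graph V E \<longleftrightarrow> finite V \<and> (\<forall>x y. E x y \<longrightarrow> E y x) \<and> (\<forall>x. \<not> E x x)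
     \<and> (\<forall>x y. E x y \<longrightarrow> x \<in> V \<and> y \<in> V)"

definition deg_in :: "'a set \<Rightarrow> ('a \<Rightarrow> 'a \<Rightarrow> bool) \<Rightarrow> 'a \<Rightarrow> nat" where
  "deg_in W E x = card {y \<in> W. E x y}"

definition independent_in :: "'a set \<Rightarrow> ('a \<Rightarrow> 'a \<Rightarrow> bool) \<Rightarrow> 'a set \<Rightarrow> bool" where
  "independent_in W E T \<longleftrightarrow> T \<subseteq> W \<and> (\<forall>x\<in>T. \<forall>y\<in>T. \<not> E x y)"

text \<open>Number of edges between T and W - T (T independent, so each such edge is
  counted exactly once as an ordered pair (t, v) with t in T).\<close>
definition cut_edges :: "'a set \<Rightarrow> ('a \<Rightarrow> 'a \<Rightarrow> bool) \<Rightarrow> 'a set \<Rightarrow> nat" where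
  "cut_edges W E T = card {(t, v). t \<in> T \<and> v \<in> W - T \<and> E t v}"

definition simple_admissible :: "'a set \<Rightarrow> ('a \<Rightarrow> 'a \<Rightarrow> bool) \<Rightarrow> 'a set \<Rightarrow> bool" where
  "simple_admissible W E T \<longleftrightarrow> independent_in W E T \<and> even (cut_edges W E T)"

inductive admissible :: "'a set \<Rightarrow> ('a \<Rightarrow> 'a \<Rightarrow> bool) \<Rightarrow> 'a set \<Rightarrow> bool"
  for V E where
  adm_empty: "admissible V E {}"
| adm_step: "admissible V E R \<Longrightarrow> simple_admissible (V - R) E T \<Longrightarrow> admissible V E (R \<union> T)"

end

theory Submission
  imports Defs
begin

text \<open>Induction on \<open>|S|\<close>. A vertex of \<open>S\<close> with even degree can be removed on its own,
  since its cut is its degree. If all vertices of \<open>S\<close> have odd degree and \<open>S\<close> is not yet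
  a clique, two non-adjacent vertices of \<open>S\<close> form an independent set whose cut is the sum
  of two odd degrees, so they can be removed together. Either way \<open>S\<close> shrinks, and
  admissible removals compose.\<close>

lemma admissible_trans:
  assumes "admissible W E R1" and "admissible (W - R1) E R2"
  shows "admissible W E (R1 \<union> R2)"
  using assms(2)
proof (induction rule: admissible.induct)
  case adm_empty
  then show ?case using assms(1) by simp
next
  case (adm_step R T)
  have "W - (R1 \<union> R) = W - R1 - R" by auto
  then have "admissible W E ((R1 \<union> R) \<union> T)"
    using admissible.adm_step[OF adm_step.IH] adm_step.hyps(2) by simp
  then show ?case by (simp add: Un_assoc)
qed

lemma admissible_if_simple_admissible:
  "simple_admissible W E T \<Longrightarrow> admissible W E T"
  using admissible.adm_step[OF admissible.adm_empty, of W E T] by simp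

lemma cut_edges_eq_sum_deg_in:
  assumes "independent_in W E T" and "finite W"
  shows "cut_edges W E T = (\<Sum>t\<in>T. deg_in W E t)"
proof -
  have "finite T" using assms finite_subset unfolding independent_in_def by blast
  moreover have "{(t, v). t \<in> T \<and> v \<in> W - T \<and> E t v} = Sigma T (\<lambda>t. {y \<in> W. E t y})"
    using assms(1) unfolding independent_in_def by auto
  ultimately show ?thesis
    unfolding cut_edges_def deg_in_def using assms(2) by (simp add: card_SigmaI)
qed

lemma simple_admissible_even_vertex:
  assumes "finite W" "v \<in> W" "\<not> E v v" "even (deg_in W E v)"
  shows "simple_admissible W E {v}"
proof -
  have "independent_in W E {v}" using assms unfolding independent_in_def by simp
  then show ?thesis
    unfolding simple_admissible_def using cut_edges_eq_sum_deg_in[OF _ assms(1)] assms by simp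
qed

lemma simple_admissible_odd_pair:
  assumes "finite W" "u \<in> W" "v \<in> W" "u \<noteq> v"
    and "\<not> E u u" "\<not> E v v" "\<not> E u v" "\<not> E v u"
    and "odd (deg_in W E u)" "odd (deg_in W E v)"
  shows "simple_admissible W E {u, v}"
proof -
  have "independent_in W E {u, v}" using assms unfolding independent_in_def by auto
  then show ?thesis
    unfolding simple_admissible_def using cut_edges_eq_sum_deg_in[OF _ assms(1)] assms by simp
qed

definition clique_odd_removal ::
    "'a set \<Rightarrow> ('a \<Rightarrow> 'a \<Rightarrow> bool) \<Rightarrow> 'a set \<Rightarrow> 'a set \<Rightarrow> bool" where
  "clique_odd_removal W E S R \<longleftrightarrow> R \<subseteq> S \<and> admissible W E R
     \<and> (\<forall>x\<in>S - R. \<forall>y\<in>S - R. x \<noteq> y \<longrightarrow> E x y)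
     \<and> (\<forall>x\<in>S - R. odd (deg_in (W - R) E x))"

lemma clique_odd_removal_extend:
  assumes T: "simple_admissible W E T" "T \<subseteq> S"
    and R: "clique_odd_removal (W - T) E (S - T) R"
  shows "clique_odd_removal W E S (T \<union> R)"
proof -
  have diffs: "S - (T \<union> R) = S - T - R" "W - (T \<union> R) = W - T - R" by auto
  have "admissible W E (T \<union> R)"
    using admissible_trans[OF admissible_if_simple_admissible[OF T(1)]] R
    unfolding clique_odd_removal_def by blast
  moreover have "T \<union> R \<subseteq> S" using T(2) R unfolding clique_odd_removal_def by blast
  ultimately show ?thesis
    using R unfolding clique_odd_removal_def diffs by blast
qed

lemma clique_odd_removal_exists:
  assumes "finite W" "S \<subseteq> W" and sym: "\<And>x y. E x y \<Longrightarrow> E y x" and irrefl: "\<And>x. \<not> E x x"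
  shows "\<exists>R. clique_odd_removal W E S R"
  using assms(1,2)
proof (induction "card S" arbitrary: S W rule: less_induct)
  case less
  have "finite S" using less.prems finite_subset by blast
  have step: "\<exists>R. clique_odd_removal W E S R"
    if "simple_admissible W E T" "T \<subseteq> S" "T \<noteq> {}" for T
  proof -
    have "card (S - T) < card S"
      using that \<open>finite S\<close> by (intro psubset_card_mono) auto
    moreover have "finite (W - T)" "S - T \<subseteq> W - T" using less.prems by auto
    ultimately obtain R where "clique_odd_removal (W - T) E (S - T) R"
      using less.hyps by blast
    then show ?thesis using clique_odd_removal_extend that by blast
  qed
  consider (even) v where "v \<in> S" "even (deg_in W E v)"
    | (clique) "\<forall>v\<in>S. odd (deg_in W E v)" "\<forall>x\<in>S. \<forall>y\<in>S. x \<noteq> y \<longrightarrow> E x y"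
    | (non_edge) u v where "u \<in> S" "v \<in> S" "u \<noteq> v" "\<not> E u v"
        "odd (deg_in W E u)" "odd (deg_in W E v)"
  proof (cases "\<exists>v\<in>S. even (deg_in W E v)")
    case True
    then show ?thesis using that(1) by blast
  next
    case False
    then show ?thesis using that(2,3) by blast
  qed
  then show ?case
  proof cases
    case even
    with less.prems have "simple_admissible W E {v}"
      by (intro simple_admissible_even_vertex irrefl) auto
    then show ?thesis using step even by blast
  next
    case clique
    then show ?thesis
      unfolding clique_odd_removal_def by (auto intro: admissible.adm_empty)
  next
    case non_edge
    with less.prems have "simple_admissible W E {u, v}"
      by (intro simple_admissible_odd_pair irrefl) (auto dest: sym)
    then show ?thesis using step non_edge by blast
  qed
qed

theorem mainTheorem6:
  fixes V S :: "'a set" and E :: "'a \<Rightarrow> 'a \<Rightarrow> bool"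
  assumes "simple_graph V E" and "S \<subseteq> V"
  shows "\<exists>R. R \<subseteq> S \<and> admissible V E R
           \<and> (\<forall>x\<in>S - R. \<forall>y\<in>S - R. x \<noteq> y \<longrightarrow> E x y)
           \<and> (\<forall>x\<in>S - R. odd (deg_in (V - R) E x))"
  using clique_odd_removal_exists[of V S E] assms
  unfolding simple_graph_def clique_odd_removal_def by blast

end
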